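(* Let $k,l$ be positive integers and let $f(s,u)=\sum_{m=k}^\infty\sum_{n=l}^\infty a_{m,n}m^{-s}n^{-u}$ be a double Dirichlet series that is absolutely convergent on $\mathbb H_{\rho_1}\times\mathbb H_{\rho_2}$ for some $\rho_1,\rho_2\in\mathbb R$. If $r>\max\{\rho_1,\rho_2\}$, then there exist positive constants $C_r,D_r$ such that for all $s,u\in\mathbb H_r$: $$|k^sl^uf(s,u)-a_{k,l}|\le C_r\Big(\frac{l^{\Re u}}{(l+1)^{\Re u-r}}+\frac{k^{\Re s}}{(k+1)^{\Re s-r}}+\frac{k^{\Re s}l^{\Re u}}{(k+1)^{\Re s-r}(l+1)^{\Re u-r}}\Big),$$ $$\Big|l^uf(s,u)-\sum_{m=k}^\infty a_{m,l}m^{-s}\Big|\le D_r\Big(\frac{l^{\Re u}}{(l+1)^{\Re u-r}}+\frac{k^{\Re s}l^{\Re u}}{(k+1)^{\Re s-r}(l+1)^{\Re u-r}}\Big).$$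
   Context: $\mathbb H_\rho=\{s\in\mathbb C:\Re s>\rho\}$. *)

theory Defs
  imports "HOL-Analysis.Analysis"
begin

definition ddterm :: "(nat \<Rightarrow> nat \<Rightarrow> complex) \<Rightarrow> complex \<Rightarrow> complex \<Rightarrow> nat \<times> nat \<Rightarrow> complex" where
  "ddterm a s u = (\<lambda>(m,n). a m n * of_nat m powr (-s) * of_nat n powr (-u))"

definition ddseries :: "(nat \<Rightarrow> nat \<Rightarrow> complex) \<Rightarrow> nat \<Rightarrow> nat \<Rightarrow> complex \<Rightarrow> complex \<Rightarrow> complex" where
  "ddseries a k l s u = infsum (ddterm a s u) ({k..} \<times> {l..})"

end

theory Submission
  imports Defs
begin

text \<open>
  Multiply out the normalising powers: every term of k^s l^u f(s,u) with (m,n) \<noteq> (k,l) is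
  a_{m,n} (k/m)^s (l/n)^u with m > k or n > l.  For m > k and Re s > r we have
  k^{Re s} m^{-Re s} \<le> k^{Re s} (k+1)^{r - Re s} m^{-r}, and for m = k the ratio is 1 = k^r m^{-r}.
  Hence each such term is bounded by a factor from the right-hand side, times a constant
  depending only on k, l, r, times |a_{m,n}| m^{-r} n^{-r}; the latter terms are summable
  because the series converges absolutely at s = u = r.  The second estimate is the same
  argument applied to the terms with n > l.
\<close>

lemma norm_infsum_le_majorant:
  fixes g :: "'a \<Rightarrow> 'b::banach"
  assumes "g summable_on T" "w summable_on S" "T \<subseteq> S" "\<And>p. p \<in> S \<Longrightarrow> 0 \<le> w p"
    and "\<And>p. p \<in> T \<Longrightarrow> norm (g p) \<le> c * w p" "0 \<le> c"
  shows "norm (infsum g T) \<le> c * infsum w S"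
proof -
  have wT: "w summable_on T"
    using assms(2,3) by (rule summable_on_subset_banach)
  have "norm (infsum g T) \<le> infsum (\<lambda>p. c * w p) T"
    using assms(1,5) wT
    by (intro norm_infsum_le[OF has_sum_infsum has_sum_infsum] summable_on_cmult_right) auto
  also have "\<dots> = c * infsum w T"
    using wT by (rule infsum_cmult_right)
  also have "\<dots> \<le> c * infsum w S"
    using assms by (intro mult_left_mono infsum_mono_neutral wT) auto
  finally show ?thesis .
qed

definition tail_factor :: "nat \<Rightarrow> real \<Rightarrow> real \<Rightarrow> real" where
  "tail_factor k \<sigma> r = real k powr \<sigma> / real (k + 1) powr (\<sigma> - r)"

lemma tail_factor_nonneg: "0 \<le> tail_factor k \<sigma> r"
  by (simp add: tail_factor_def)

lemma powr_ratio_le_tail_factor: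
  assumes "k < m" "r < \<sigma>"
  shows "real k powr \<sigma> * real m powr - \<sigma> \<le> tail_factor k \<sigma> r * real m powr - r"
proof -
  have "real k powr \<sigma> * real m powr - \<sigma> = real k powr \<sigma> * real m powr (r - \<sigma>) * real m powr - r"
    by (simp add: mult.assoc flip: powr_add)
  also have "\<dots> \<le> real k powr \<sigma> * real (k + 1) powr (r - \<sigma>) * real m powr - r"
    using assms by (intro mult_right_mono mult_left_mono powr_mono2') auto
  also have "\<dots> = tail_factor k \<sigma> r * real m powr - r"
    by (simp add: tail_factor_def powr_diff)
  finally show ?thesis .
qed

lemma powr_ratio_le_leading_or_tail:
  assumes "0 < k" "k \<le> m" "r < \<sigma>"
  shows "real k powr \<sigma> * real m powr - \<sigma>
    \<le> (if m = k then real k powr r else tail_factor k \<sigma> r) * real m powr - r"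
  using assms powr_ratio_le_tail_factor[of k m r \<sigma>] by (auto simp flip: powr_add)

lemma powr_neg_le_leading_or_tail:
  assumes "0 < k" "k \<le> m" "r < \<sigma>"
  shows "real m powr - \<sigma>
    \<le> (if m = k then 1 else real k powr - r * tail_factor k \<sigma> r) * real m powr - r"
proof (cases "m = k")
  case True
  then show ?thesis using assms by (simp add: powr_mono)
next
  case False
  have "real m powr - \<sigma> = real k powr - \<sigma> * (real k powr \<sigma> * real m powr - \<sigma>)"
    using assms by (simp add: mult.assoc[symmetric] flip: powr_add)
  also have "\<dots> \<le> real k powr - r * (tail_factor k \<sigma> r * real m powr - r)"
  proof (rule mult_mono)
    show "real k powr - \<sigma> \<le> real k powr - r" using assms by (intro powr_mono) auto
  qed (use assms False powr_ratio_le_tail_factor[of k m r \<sigma>] in auto)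
  finally show ?thesis using False by (simp add: mult.assoc)
qed

lemma normalized_term_le_off_leading:
  assumes "0 < k" "0 < l" "k \<le> m" "l \<le> n" "(m, n) \<noteq> (k, l)" "r < \<sigma>" "r < \<tau>"
  shows "real k powr \<sigma> * real l powr \<tau> * (real m powr - \<sigma> * real n powr - \<tau>)
    \<le> (real k powr r + real l powr r + 1)
       * (tail_factor l \<tau> r + tail_factor k \<sigma> r + tail_factor k \<sigma> r * tail_factor l \<tau> r)
       * (real m powr - r * real n powr - r)"
proof -
  define \<alpha> where "\<alpha> = (if m = k then real k powr r else tail_factor k \<sigma> r)"
  define \<beta> where "\<beta> = (if n = l then real l powr r else tail_factor l \<tau> r)"
  have "real k powr \<sigma> * real l powr \<tau> * (real m powr - \<sigma> * real n powr - \<tau>)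
      = (real k powr \<sigma> * real m powr - \<sigma>) * (real l powr \<tau> * real n powr - \<tau>)"
    by (simp add: ac_simps)
  also have "\<dots> \<le> (\<alpha> * real m powr - r) * (\<beta> * real n powr - r)"
    unfolding \<alpha>_def \<beta>_def using assms
    by (intro mult_mono powr_ratio_le_leading_or_tail) (auto simp: tail_factor_nonneg)
  also have "\<dots> = \<alpha> * \<beta> * (real m powr - r * real n powr - r)"
    by (simp add: ac_simps)
  also have "\<alpha> * \<beta> \<le> (real k powr r + real l powr r + 1)
       * (tail_factor l \<tau> r + tail_factor k \<sigma> r + tail_factor k \<sigma> r * tail_factor l \<tau> r)"
    using assms(5) unfolding \<alpha>_def \<beta>_def
    by (auto simp: algebra_simps tail_factor_nonneg add_nonneg_nonneg mult_nonneg_nonneg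
        intro!: add_increasing add_increasing2)
  finally show ?thesis by (simp add: mult_right_mono)
qed

lemma normalized_term_le_off_first_row:
  assumes "0 < k" "k \<le> m" "l < n" "r < \<sigma>" "r < \<tau>"
  shows "real l powr \<tau> * (real m powr - \<sigma> * real n powr - \<tau>)
    \<le> (1 + real k powr - r) * (tail_factor l \<tau> r + tail_factor k \<sigma> r * tail_factor l \<tau> r)
       * (real m powr - r * real n powr - r)"
proof -
  define \<alpha> where "\<alpha> = (if m = k then 1 else real k powr - r * tail_factor k \<sigma> r)"
  have "real l powr \<tau> * (real m powr - \<sigma> * real n powr - \<tau>)
      = real m powr - \<sigma> * (real l powr \<tau> * real n powr - \<tau>)"
    by (simp add: ac_simps)
  also have "\<dots> \<le> (\<alpha> * real m powr - r) * (tail_factor l \<tau> r * real n powr - r)"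
    unfolding \<alpha>_def using assms
    by (intro mult_mono powr_neg_le_leading_or_tail powr_ratio_le_tail_factor) (auto simp: tail_factor_nonneg)
  also have "\<dots> = \<alpha> * tail_factor l \<tau> r * (real m powr - r * real n powr - r)"
    by (simp add: ac_simps)
  also have "\<alpha> * tail_factor l \<tau> r
      \<le> (1 + real k powr - r) * (tail_factor l \<tau> r + tail_factor k \<sigma> r * tail_factor l \<tau> r)"
    unfolding \<alpha>_def
    by (auto simp: algebra_simps tail_factor_nonneg add_nonneg_nonneg mult_nonneg_nonneg
        intro!: add_increasing add_increasing2)
  finally show ?thesis by (simp add: mult_right_mono)
qed

lemma norm_ddterm:
  "norm (ddterm a s u (m, n)) = norm (a m n) * (real m powr - Re s * real n powr - Re u)"
  by (simp add: ddterm_def norm_mult norm_powr_real_powr)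

lemma ddseries_remove_leading_term:
  assumes "0 < k" "0 < l" "ddterm a s u summable_on {k..} \<times> {l..}"
  shows "of_nat k powr s * of_nat l powr u * ddseries a k l s u - a k l
    = (\<Sum>\<^sub>\<infinity>p \<in> {k..} \<times> {l..} - {(k, l)}. of_nat k powr s * of_nat l powr u * ddterm a s u p)"
proof -
  let ?g = "\<lambda>p. of_nat k powr s * of_nat l powr u * ddterm a s u p"
  have "of_nat k powr s * of_nat l powr u * ddseries a k l s u = infsum ?g ({k..} \<times> {l..})"
    unfolding ddseries_def using assms(3) by (rule infsum_cmult_right[symmetric])
  also have "{k..} \<times> {l..} = insert (k, l) ({k..} \<times> {l..} - {(k, l)})"
    by auto
  also have "infsum ?g \<dots> = ?g (k, l) + infsum ?g ({k..} \<times> {l..} - {(k, l)})"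
    by (intro infsum_insert summable_on_cmult_right summable_on_subset_banach[OF assms(3)]) auto
  also have "?g (k, l) = a k l"
  proof -
    have "(of_nat k powr s :: complex) * of_nat k powr (-s) = 1"
      and "(of_nat l powr u :: complex) * of_nat l powr (-u) = 1"
      using assms(1,2) by (simp_all flip: powr_add)
    then show ?thesis by (simp add: ddterm_def algebra_simps)
  qed
  finally show ?thesis by simp
qed

lemma ddseries_remove_first_row:
  assumes "0 < l" "ddterm a s u summable_on {k..} \<times> {l..}"
  shows "of_nat l powr u * ddseries a k l s u - (\<Sum>\<^sub>\<infinity>m\<in>{k..}. a m l * of_nat m powr (-s))
    = (\<Sum>\<^sub>\<infinity>p \<in> {k..} \<times> {l<..}. of_nat l powr u * ddterm a s u p)"
proof -
  let ?g = "\<lambda>p. of_nat l powr u * ddterm a s u p"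
  have summable: "?g summable_on {k..} \<times> {l..}"
    using assms(2) by (rule summable_on_cmult_right)
  have "of_nat l powr u * ddseries a k l s u = infsum ?g ({k..} \<times> {l..})"
    unfolding ddseries_def using assms(2) by (rule infsum_cmult_right[symmetric])
  also have "{k..} \<times> {l..} = (\<lambda>m. (m, l)) ` {k..} \<union> {k..} \<times> {l<..}"
    by auto
  also have "infsum ?g \<dots> = infsum ?g ((\<lambda>m. (m, l)) ` {k..}) + infsum ?g ({k..} \<times> {l<..})"
    by (intro infsum_Un_disjoint summable_on_subset_banach[OF summable]) auto
  also have "infsum ?g ((\<lambda>m. (m, l)) ` {k..}) = (\<Sum>\<^sub>\<infinity>m\<in>{k..}. a m l * of_nat m powr (-s))"
  proof -
    have "(of_nat l powr u :: complex) * of_nat l powr (-u) = 1"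
      using assms(1) by (simp flip: powr_add)
    then have "?g (m, l) = a m l * of_nat m powr (-s)" for m
      by (simp add: ddterm_def algebra_simps)
    then show ?thesis
      by (simp add: infsum_reindex inj_on_def o_def)
  qed
  finally show ?thesis by simp
qed

lemma norm_ddseries_leading_error_le:
  assumes "0 < k" "0 < l" "r < Re s" "r < Re u"
    and summable: "ddterm a s u summable_on {k..} \<times> {l..}"
    and majorant: "(\<lambda>p. norm (ddterm a r r p)) summable_on {k..} \<times> {l..}"
  shows "norm (of_nat k powr s * of_nat l powr u * ddseries a k l s u - a k l)
    \<le> (real k powr r + real l powr r + 1)
       * (tail_factor l (Re u) r + tail_factor k (Re s) r + tail_factor k (Re s) r * tail_factor l (Re u) r)
       * (\<Sum>\<^sub>\<infinity>p\<in>{k..} \<times> {l..}. norm (ddterm a r r p))"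
  unfolding ddseries_remove_leading_term[OF assms(1,2) summable]
proof (rule norm_infsum_le_majorant[OF _ majorant])
  show "(\<lambda>p. of_nat k powr s * of_nat l powr u * ddterm a s u p) summable_on {k..} \<times> {l..} - {(k, l)}"
    by (intro summable_on_cmult_right summable_on_subset_banach[OF summable]) auto
  fix p assume "p \<in> {k..} \<times> {l..} - {(k, l)}"
  then obtain m n where p: "p = (m, n)" "k \<le> m" "l \<le> n" "(m, n) \<noteq> (k, l)"
    by auto
  have "norm (of_nat k powr s * of_nat l powr u * ddterm a s u p)
      = norm (a m n) * (real k powr Re s * real l powr Re u * (real m powr - Re s * real n powr - Re u))"
    by (simp add: p norm_mult norm_ddterm norm_powr_real_powr mult_ac)
  also have "\<dots> \<le> norm (a m n) * ((real k powr r + real l powr r + 1)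
       * (tail_factor l (Re u) r + tail_factor k (Re s) r + tail_factor k (Re s) r * tail_factor l (Re u) r)
       * (real m powr - r * real n powr - r))"
    using assms p by (intro mult_left_mono normalized_term_le_off_leading) auto
  finally show "norm (of_nat k powr s * of_nat l powr u * ddterm a s u p)
    \<le> (real k powr r + real l powr r + 1)
       * (tail_factor l (Re u) r + tail_factor k (Re s) r + tail_factor k (Re s) r * tail_factor l (Re u) r)
       * norm (ddterm a r r p)"
    by (simp add: p norm_ddterm mult_ac)
qed (auto simp: tail_factor_nonneg)

lemma norm_ddseries_first_row_error_le:
  assumes "0 < k" "0 < l" "r < Re s" "r < Re u"
    and summable: "ddterm a s u summable_on {k..} \<times> {l..}"
    and majorant: "(\<lambda>p. norm (ddterm a r r p)) summable_on {k..} \<times> {l..}"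
  shows "norm (of_nat l powr u * ddseries a k l s u - (\<Sum>\<^sub>\<infinity>m\<in>{k..}. a m l * of_nat m powr (-s)))
    \<le> (1 + real k powr - r) * (tail_factor l (Re u) r + tail_factor k (Re s) r * tail_factor l (Re u) r)
       * (\<Sum>\<^sub>\<infinity>p\<in>{k..} \<times> {l..}. norm (ddterm a r r p))"
  unfolding ddseries_remove_first_row[OF assms(2) summable]
proof (rule norm_infsum_le_majorant[OF _ majorant])
  show "(\<lambda>p. of_nat l powr u * ddterm a s u p) summable_on {k..} \<times> {l<..}"
    by (intro summable_on_cmult_right summable_on_subset_banach[OF summable]) auto
  fix p assume "p \<in> {k..} \<times> {l<..}"
  then obtain m n where p: "p = (m, n)" "k \<le> m" "l < n"
    by auto
  have "norm (of_nat l powr u * ddterm a s u p)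
      = norm (a m n) * (real l powr Re u * (real m powr - Re s * real n powr - Re u))"
    by (simp add: p norm_mult norm_ddterm norm_powr_real_powr mult_ac)
  also have "\<dots> \<le> norm (a m n) * ((1 + real k powr - r)
       * (tail_factor l (Re u) r + tail_factor k (Re s) r * tail_factor l (Re u) r)
       * (real m powr - r * real n powr - r))"
    using assms p by (intro mult_left_mono normalized_term_le_off_first_row) auto
  finally show "norm (of_nat l powr u * ddterm a s u p)
    \<le> (1 + real k powr - r) * (tail_factor l (Re u) r + tail_factor k (Re s) r * tail_factor l (Re u) r)
       * norm (ddterm a r r p)"
    by (simp add: p norm_ddterm mult_ac)
qed (auto simp: tail_factor_nonneg)

theorem lemma2p5:
  fixes a :: "nat \<Rightarrow> nat \<Rightarrow> complex" and k l :: nat and \<rho>1 \<rho>2 r :: real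
  assumes "k > 0" and "l > 0"
    and abs_conv: "\<And>s u. Re s > \<rho>1 \<Longrightarrow> Re u > \<rho>2 \<Longrightarrow>
                     (\<lambda>p. norm (ddterm a s u p)) summable_on ({k..} \<times> {l..})"
    and "r > max \<rho>1 \<rho>2"
  shows "\<exists>C>0. \<exists>D>0. \<forall>s u. Re s > r \<and> Re u > r \<longrightarrow>
     norm (of_nat k powr s * of_nat l powr u * ddseries a k l s u - a k l)
       \<le> C * (real l powr Re u / real (l+1) powr (Re u - r)
              + real k powr Re s / real (k+1) powr (Re s - r)
              + real k powr Re s * real l powr Re u
                / (real (k+1) powr (Re s - r) * real (l+1) powr (Re u - r)))
   \<and> norm (of_nat l powr u * ddseries a k l s u
            - (\<Sum>\<^sub>\<infinity>m\<in>{k..}. a m l * of_nat m powr (-s)))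
       \<le> D * (real l powr Re u / real (l+1) powr (Re u - r)
              + real k powr Re s * real l powr Re u
                / (real (k+1) powr (Re s - r) * real (l+1) powr (Re u - r)))"
proof -
  let ?S = "{k..} \<times> {l..}"
  define W where "W = (\<Sum>\<^sub>\<infinity>p\<in>?S. norm (ddterm a r r p))"
  define C where "C = (real k powr r + real l powr r + 1) * (W + 1)"
  define D where "D = (1 + real k powr - r) * (W + 1)"
  have majorant: "(\<lambda>p. norm (ddterm a r r p)) summable_on ?S"
    using abs_conv assms(4) by simp
  have "0 \<le> W"
    unfolding W_def by (intro infsum_nonneg) auto
  have tail_product: "real k powr \<sigma> * real l powr \<tau>
      / (real (k + 1) powr (\<sigma> - r) * real (l + 1) powr (\<tau> - r)) = tail_factor k \<sigma> r * tail_factor l \<tau> r" for \<sigma> \<tau>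
    by (simp add: tail_factor_def)
  show ?thesis
    unfolding tail_product tail_factor_def[symmetric]
  proof (rule exI[of _ C], intro conjI exI[of _ D] allI impI)
    show "0 < C"
      using \<open>0 \<le> W\<close> by (simp add: C_def add_nonneg_pos)
    show "0 < D"
      using \<open>0 \<le> W\<close> by (simp add: D_def add_pos_nonneg)
    fix s u :: complex
    assume "r < Re s \<and> r < Re u"
    then have "r < Re s" "r < Re u" and summable: "ddterm a s u summable_on ?S"
      using abs_conv assms(4) by (auto intro: abs_summable_summable)
    show "norm (of_nat k powr s * of_nat l powr u * ddseries a k l s u - a k l)
      \<le> C * (tail_factor l (Re u) r + tail_factor k (Re s) r + tail_factor k (Re s) r * tail_factor l (Re u) r)"
      using norm_ddseries_leading_error_le[OF assms(1,2) \<open>r < Re s\<close> \<open>r < Re u\<close> summable majorant]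
      unfolding W_def[symmetric] C_def
      by (rule order_trans)
        (use \<open>0 \<le> W\<close> in \<open>auto simp: tail_factor_nonneg mult_ac intro!: mult_right_mono\<close>)
    show "norm (of_nat l powr u * ddseries a k l s u - (\<Sum>\<^sub>\<infinity>m\<in>{k..}. a m l * of_nat m powr (-s)))
      \<le> D * (tail_factor l (Re u) r + tail_factor k (Re s) r * tail_factor l (Re u) r)"
      using norm_ddseries_first_row_error_le[OF assms(1,2) \<open>r < Re s\<close> \<open>r < Re u\<close> summable majorant]
      unfolding W_def[symmetric] D_def
      by (rule order_trans)
        (use \<open>0 \<le> W\<close> in \<open>auto simp: tail_factor_nonneg mult_ac intro!: mult_right_mono\<close>)
  qed
qed

end
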